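(* Let $P\subset\mathbb{R}^2$ be a smooth domain, $a>0$, $h>0$ with $ah\le1/3$, and $F:P\times\{0,h\}\times[0,\infty)\to\mathbb{R}$ bounded. Then for every $x\in P$, $x_3\in[0,h]$ and $t>0$, $$\left|\int_0^t\int_{P\times\{0,h\}}W(x,t,y,s)P_1(x_3,t,y_3,s)F(y,y_3,s)\,dS_y\,ds-\int_0^t\int_{P\times\{0,h\}}2e^{-\alpha_1^2(t-s)}\frac{\alpha_1^2}{4a}W(x,t,y,s)F(y,y_3,s)\,dS_y\,ds\right|\le5h\|F\|_{L^\infty([0,t])}.$$
   Context: $\alpha_1$ is the smallest positive solution $q$ of $\tan(hq)=\frac{2aq}{q^2-a^2}$, and for $z,w\in[0,h]$, $t>s$, $$P_1(z,t,w,s)=\frac{2e^{-\alpha_1^2(t-s)}[\alpha_1\cos(\alpha_1 z)+a\sin(\alpha_1 z)][\alpha_1\cos(\alpha_1 w)+a\sin(\alpha_1 w)]}{2a+h(a^2+\alpha_1^2)}.$$ $W(x,t,y,s)$ ($x,y\in P$, $t>s$) is the Green's function of the heat equation on $P$ with homogeneous Neumann boundary condition (the kernel such that $u(x,t)=\int_P W(x,t,y,0)g(y)\,dy$ solves $\partial_tu-\Delta u=0$ in $P$, $u(\cdot,0)=g$, $\partial u/\partial\nu=0$ on $\partial P$). $\int_{P\times\{0,h\}}f(y,y_3)\,dS_y:=\int_Pf(y,0)\,dy+\int_Pf(y,h)\,dy$, and $\|F\|_{L^\infty([0,t])}:=\sup_{(y,y_3,s)\in P\times\{0,h\}\times[0,t]}|F(y,y_3,s)|$.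 *)

theory Defs
  imports "HOL-Analysis.Analysis"
begin

text \<open>A function rho on R^2 is C-infinity: there is a family D of all iterated
  partial derivatives (indexed by lists of coordinate directions), each of which is
  everywhere (Frechet) differentiable with partial derivatives given by D again.\<close>
definition smooth_R2 :: "(real^2 \<Rightarrow> real) \<Rightarrow> bool" where
  "smooth_R2 f \<longleftrightarrow> (\<exists>D :: 2 list \<Rightarrow> real^2 \<Rightarrow> real.
      D [] = f \<and>
      (\<forall>js x. (D js has_derivative (\<lambda>v. \<Sum>i\<in>UNIV. v $ i * D (i # js) x)) (at x)))"

definition grad :: "(real^2 \<Rightarrow> real) \<Rightarrow> real^2 \<Rightarrow> real^2" where
  "grad f x = (\<chi> i. frechet_derivative f (at x) (axis i 1))"

definition smooth_domain :: "(real^2) set \<Rightarrow> (real^2 \<Rightarrow> real) \<Rightarrow> bool" where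
  "smooth_domain P \<rho> \<longleftrightarrow> P \<noteq> {} \<and> connected P \<and> bounded P \<and> smooth_R2 \<rho> \<and>
     P = {x. \<rho> x < 0} \<and> (\<forall>x. \<rho> x = 0 \<longrightarrow> grad \<rho> x \<noteq> 0)"

definition outer_normal :: "(real^2 \<Rightarrow> real) \<Rightarrow> real^2 \<Rightarrow> real^2" where
  "outer_normal \<rho> x = grad \<rho> x /\<^sub>R norm (grad \<rho> x)"

definition neumann_heat_solution ::
  "(real^2) set \<Rightarrow> (real^2 \<Rightarrow> real) \<Rightarrow> real \<Rightarrow> (real^2 \<Rightarrow> real) \<Rightarrow> (real^2 \<Rightarrow> real \<Rightarrow> real) \<Rightarrow> bool"
where
  "neumann_heat_solution P \<rho> s g u \<longleftrightarrow>
     continuous_on (closure P \<times> {s<..}) (\<lambda>(x,t). u x t) \<and>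
     (\<forall>x0\<in>closure P. ((\<lambda>(x,t). u x t) \<longlongrightarrow> g x0) (at (x0, s) within closure P \<times> {s<..})) \<and>
     (\<exists>(ut :: real^2 \<Rightarrow> real \<Rightarrow> real) (gr :: real^2 \<Rightarrow> real \<Rightarrow> real^2) (H :: real^2 \<Rightarrow> real \<Rightarrow> real^2^2).
        (\<forall>x\<in>P. \<forall>t>s.
           ((\<lambda>\<tau>. u x \<tau>) has_real_derivative ut x t) (at t) \<and>
           ((\<lambda>y. u y t) has_derivative (\<lambda>v. gr x t \<bullet> v)) (at x) \<and>
           ((\<lambda>y. gr y t) has_derivative (\<lambda>v. H x t *v v)) (at x) \<and>
           ut x t = (\<Sum>i\<in>UNIV. H x t $ i $ i)) \<and>
        continuous_on (P \<times> {s<..}) (\<lambda>(x,t). ut x t) \<and>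
        continuous_on (P \<times> {s<..}) (\<lambda>(x,t). H x t)) \<and>
     (\<forall>x\<in>frontier P. \<forall>t>s.
        ((\<lambda>r. (u (x - r *\<^sub>R outer_normal \<rho> x) t - u x t) / r) \<longlongrightarrow> 0) (at_right 0))"

definition neumann_heat_kernel ::
  "(real^2) set \<Rightarrow> (real^2 \<Rightarrow> real) \<Rightarrow> (real^2 \<Rightarrow> real \<Rightarrow> real^2 \<Rightarrow> real \<Rightarrow> real) \<Rightarrow> bool"
where
  "neumann_heat_kernel P \<rho> W \<longleftrightarrow>
     continuous_on {(x,t,y,s). x \<in> closure P \<and> y \<in> closure P \<and> s < t} (\<lambda>(x,t,y,s). W x t y s) \<and>
     (\<forall>s g. continuous_on (closure P) g \<longrightarrow>
        (\<forall>x\<in>closure P. \<forall>t>s. set_integrable lborel P (\<lambda>y. W x t y s * g y)) \<and>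
        neumann_heat_solution P \<rho> s g (\<lambda>x t. LINT y:P|lborel. W x t y s * g y))"

definition alpha1 :: "real \<Rightarrow> real \<Rightarrow> real" where
  "alpha1 a h = (THE q. q > 0 \<and> tan (h * q) = 2 * a * q / (q\<^sup>2 - a\<^sup>2) \<and>
      (\<forall>q'. q' > 0 \<and> tan (h * q') = 2 * a * q' / (q'\<^sup>2 - a\<^sup>2) \<longrightarrow> q \<le> q'))"

definition P1 :: "real \<Rightarrow> real \<Rightarrow> real \<Rightarrow> real \<Rightarrow> real \<Rightarrow> real \<Rightarrow> real" where
  "P1 a h z t w s =
     2 * exp (- (alpha1 a h)\<^sup>2 * (t - s))
       * (alpha1 a h * cos (alpha1 a h * z) + a * sin (alpha1 a h * z))
       * (alpha1 a h * cos (alpha1 a h * w) + a * sin (alpha1 a h * w))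
     / (2 * a + h * (a\<^sup>2 + (alpha1 a h)\<^sup>2))"

end

theory Submission
  imports Defs
begin

text \<open>
  Write \<open>\<alpha> = alpha1 a h\<close> and \<open>e(s) = exp (-\<alpha>\<^sup>2 (t - s))\<close>. Since \<open>a h < \<pi>/2\<close>, the
  secular equation has its least positive root where \<open>h \<alpha> = 2 arctan (a / \<alpha>)\<close> and \<open>\<alpha> > a\<close>.
  Hence the eigenfunction \<open>\<alpha> cos (\<alpha> z) + a sin (\<alpha> z)\<close> equals \<open>\<alpha>\<close> on both faces and stays in
  \<open>[\<alpha>, \<alpha> + a\<^sup>2/(2\<alpha>)]\<close> on \<open>[0, h]\<close>, while \<open>u - u\<^sup>3/3 \<le> arctan u \<le> u\<close> pins \<open>h \<alpha>\<^sup>2\<close> to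
  \<open>[4a/3, 2a]\<close>. Together: \<open>|P\<^sub>1(x\<^sub>3,t,y\<^sub>3,s) - 2 e(s) \<alpha>\<^sup>2/(4a)| \<le> (h/2) \<alpha>\<^sup>2 e(s)\<close> for
  \<open>y\<^sub>3 \<in> {0, h}\<close>.

  The Neumann heat kernel satisfies \<open>\<integral>\<^sub>P |W(x,t,y,s)| dy \<le> 1\<close>: testing it against continuous
  data bounded by \<open>1\<close> gives solutions bounded by \<open>1\<close> by the maximum principle, which holds
  because after subtracting \<open>\<epsilon> (\<rho> + C t)\<close> neither interior nor boundary maxima can occur.
  Integrating the pointwise bound over \<open>[0, t]\<close> against \<open>\<alpha>\<^sup>2 e(s)\<close> yields the estimate even with
  \<open>h\<close> in place of \<open>5 h\<close>.
\<close>

section \<open>The first transverse eigenvalue\<close>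

lemma arctan_div_lt_pi4:
  assumes "0 < a" "a < (q::real)"
  shows "arctan (a / q) < pi / 4"
proof -
  have "a / q < 1"
    using assms by simp
  then show ?thesis
    using arctan_monotone[of "a / q" 1] by simp
qed

lemma tan_double_arctan_div:
  assumes "0 < a" "a < (q::real)"
  shows "tan (2 * arctan (a / q)) = 2 * a * q / (q\<^sup>2 - a\<^sup>2)"
proof -
  have "0 < arctan (a / q)"
    using assms by simp
  then have "cos (2 * arctan (a / q)) > 0"
    using arctan_div_lt_pi4[OF assms] pi_gt_zero by (intro cos_gt_zero_pi) linarith+
  then have "tan (2 * arctan (a / q)) = 2 * (a / q) / (1 - (a / q)\<^sup>2)"
    by (subst tan_double) (auto simp: arctan)
  also have "\<dots> = 2 * a * q / (q\<^sup>2 - a\<^sup>2)"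
    using assms by (simp add: field_simps power2_eq_square)
  finally show ?thesis .
qed

lemma double_arctan_fixpoint_exists:
  assumes "0 < a" "0 < h" "a * h < pi / 2"
  obtains q :: real where "a < q" "h * q = 2 * arctan (a / q)"
proof -
  define f where "f q = h * q - 2 * arctan (a / q)" for q
  have "f a < 0"
    using assms by (simp add: f_def arctan_one algebra_simps)
  moreover have "f (pi / h) > 0"
    using assms arctan_ubound[of "a / (pi / h)"] by (simp add: f_def)
  moreover have "a * h \<le> pi"
    using assms pi_gt_zero by linarith
  then have "a \<le> pi / h"
    using assms by (simp add: field_simps)
  moreover have "continuous_on {a..pi / h} f"
    unfolding f_def using assms by (intro continuous_intros) auto
  ultimately obtain q where q: "a \<le> q" "f q = 0"
    using IVT'[of f a 0 "pi / h"] by force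
  moreover have "q \<noteq> a"
    using q \<open>f a < 0\<close> by auto
  ultimately show ?thesis
    using that[of q] by (simp add: f_def)
qed

text \<open>Below the fixpoint there is no positive root of the secular equation: for
  \<open>q \<le> a\<close> both sides have opposite signs, and for \<open>a < q < q\<^sub>0\<close> we have
  \<open>h q < 2 arctan (a / q) < \<pi> / 2\<close>, where \<open>tan\<close> is increasing.\<close>
lemma double_arctan_fixpoint_le_root:
  assumes a: "0 < a" and h: "0 < h" "a * h < pi / 2"
    and q0: "a < q0" "h * q0 = 2 * arctan (a / q0)"
    and q: "0 < q" "tan (h * q) = 2 * a * q / (q\<^sup>2 - a\<^sup>2)"
  shows "q0 \<le> q"
proof (rule ccontr)
  assume "\<not> q0 \<le> q"
  then have "q < q0" by simp
  show False
  proof (cases "q \<le> a")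
    case True
    have "h * q \<le> a * h"
      using mult_left_mono[OF True, of h] h by (simp add: mult.commute)
    then have "h * q < pi / 2"
      using h by linarith
    then have "tan (h * q) > 0"
      using q h by (intro tan_gt_zero) auto
    moreover have "q\<^sup>2 \<le> a\<^sup>2"
      using True q by (simp add: power_mono)
    then have "2 * a * q / (q\<^sup>2 - a\<^sup>2) \<le> 0"
      using a q by (simp add: divide_nonneg_nonpos)
    ultimately show False
      using q by simp
  next
    case False
    then have "a < q" by simp
    have "a / q0 < a / q"
      using \<open>q < q0\<close> q a by (simp add: frac_less2)
    then have "arctan (a / q0) < arctan (a / q)"
      by (simp add: arctan_less_iff)
    moreover have "h * q < h * q0"
      using \<open>q < q0\<close> h by simp
    ultimately have "h * q < 2 * arctan (a / q)"
      using q0 by linarith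
    then have "tan (h * q) < tan (2 * arctan (a / q))"
      using arctan_div_lt_pi4[OF a \<open>a < q\<close>] mult_pos_pos[OF h(1) q(1)] pi_gt_zero
      by (intro tan_monotone) linarith+
    then show False
      using tan_double_arctan_div[OF a \<open>a < q\<close>] q by simp
  qed
qed

lemma alpha1_double_arctan:
  assumes "0 < a" "0 < h" "a * h < pi / 2"
  shows "a < alpha1 a h" and "h * alpha1 a h = 2 * arctan (a / alpha1 a h)"
proof -
  obtain q0 where q0: "a < q0" "h * q0 = 2 * arctan (a / q0)"
    using double_arctan_fixpoint_exists[OF assms] .
  have "alpha1 a h = q0"
    unfolding alpha1_def
  proof (rule the_equality)
    have "q0 > 0 \<and> tan (h * q0) = 2 * a * q0 / (q0\<^sup>2 - a\<^sup>2)"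
      using q0 assms tan_double_arctan_div[of a q0] by simp
    then show root: "q0 > 0 \<and> tan (h * q0) = 2 * a * q0 / (q0\<^sup>2 - a\<^sup>2) \<and>
        (\<forall>q. q > 0 \<and> tan (h * q) = 2 * a * q / (q\<^sup>2 - a\<^sup>2) \<longrightarrow> q0 \<le> q)"
      using double_arctan_fixpoint_le_root[OF assms q0] by blast
    fix q assume "q > 0 \<and> tan (h * q) = 2 * a * q / (q\<^sup>2 - a\<^sup>2) \<and>
        (\<forall>q'. q' > 0 \<and> tan (h * q') = 2 * a * q' / (q'\<^sup>2 - a\<^sup>2) \<longrightarrow> q \<le> q')"
    then show "q = q0"
      using root by (meson order_antisym)
  qed
  then show "a < alpha1 a h" "h * alpha1 a h = 2 * arctan (a / alpha1 a h)"
    using q0 by simp_all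
qed

lemma cos_sin_phase_form:
  fixes \<alpha> a y :: real
  assumes "0 < \<alpha>"
  shows "\<alpha> * cos y + a * sin y = sqrt (\<alpha>\<^sup>2 + a\<^sup>2) * cos (y - arctan (a / \<alpha>))"
proof -
  define R where "R = sqrt (\<alpha>\<^sup>2 + a\<^sup>2)"
  have "0 < R"
    using assms by (simp add: R_def add_pos_nonneg)
  have "1 + (a / \<alpha>)\<^sup>2 = (R / \<alpha>)\<^sup>2"
    using assms by (simp add: R_def power_divide field_simps)
  then have "sqrt (1 + (a / \<alpha>)\<^sup>2) = R / \<alpha>"
    using assms \<open>0 < R\<close> by simp
  then have "cos (arctan (a / \<alpha>)) = \<alpha> / R" "sin (arctan (a / \<alpha>)) = a / R"
    using assms \<open>0 < R\<close> by (simp_all add: cos_arctan sin_arctan)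
  then have "R * cos (y - arctan (a / \<alpha>)) = R * (cos y * (\<alpha> / R) + sin y * (a / R))"
    by (simp add: cos_diff)
  also have "\<dots> = \<alpha> * cos y + a * sin y"
    using \<open>0 < R\<close> by (simp add: field_simps)
  finally have "R * cos (y - arctan (a / \<alpha>)) = \<alpha> * cos y + a * sin y" .
  then show ?thesis
    by (simp add: R_def)
qed

text \<open>With \<open>\<beta> = arctan (a / \<alpha>)\<close> the fixpoint equation reads \<open>\<alpha> h = 2 \<beta>\<close>, so the phase
  \<open>\<alpha> z - \<beta>\<close> of the eigenfunction stays in \<open>[-\<beta>, \<beta>]\<close> on \<open>[0, h]\<close>.\<close>
lemma eigenfunction_bounds:
  fixes a h \<alpha> z :: real
  assumes a: "0 < a" and \<alpha>: "a < \<alpha>" "h * \<alpha> = 2 * arctan (a / \<alpha>)"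
    and z: "0 \<le> z" "z \<le> h"
  shows "\<alpha> * cos (\<alpha> * h) + a * sin (\<alpha> * h) = \<alpha>"
    and "\<alpha> \<le> \<alpha> * cos (\<alpha> * z) + a * sin (\<alpha> * z)"
    and "\<alpha> * cos (\<alpha> * z) + a * sin (\<alpha> * z) \<le> \<alpha> + a\<^sup>2 / (2 * \<alpha>)"
proof -
  define \<beta> where "\<beta> = arctan (a / \<alpha>)"
  define R where "R = sqrt (\<alpha>\<^sup>2 + a\<^sup>2)"
  have "0 < \<alpha>" using a \<alpha> by simp
  then have phase: "\<alpha> * cos (\<alpha> * y) + a * sin (\<alpha> * y) = R * cos (\<alpha> * y - \<beta>)" for y
    unfolding R_def \<beta>_def by (rule cos_sin_phase_form)
  have R_cos: "R * cos \<beta> = \<alpha>"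
    using phase[of 0] by simp
  have "0 < \<beta>" "\<beta> < pi / 4"
    using a \<alpha> arctan_div_lt_pi4[OF a \<alpha>(1)] by (auto simp: \<beta>_def)
  have "\<alpha> * h = 2 * \<beta>"
    using \<alpha> by (simp add: \<beta>_def mult.commute)
  then show "\<alpha> * cos (\<alpha> * h) + a * sin (\<alpha> * h) = \<alpha>"
    using phase[of h] R_cos by simp
  have "0 \<le> \<alpha> * z" "\<alpha> * z \<le> \<alpha> * h"
    using z \<open>0 < \<alpha>\<close> by (simp_all add: mult_left_mono)
  then have "\<bar>\<alpha> * z - \<beta>\<bar> \<le> \<beta>"
    using \<open>\<alpha> * h = 2 * \<beta>\<close> by linarith
  then have "cos \<beta> \<le> cos (\<alpha> * z - \<beta>)"
    using \<open>0 < \<beta>\<close> \<open>\<beta> < pi / 4\<close> cos_monotone_0_pi_le[of "\<bar>\<alpha> * z - \<beta>\<bar>" \<beta>] by simp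
  then have "R * cos \<beta> \<le> R * cos (\<alpha> * z - \<beta>)"
    by (simp add: R_def mult_left_mono)
  then show "\<alpha> \<le> \<alpha> * cos (\<alpha> * z) + a * sin (\<alpha> * z)"
    using phase[of z] R_cos by simp
  have "(\<alpha> + a\<^sup>2 / (2 * \<alpha>))\<^sup>2 = \<alpha>\<^sup>2 + a\<^sup>2 + (a\<^sup>2 / (2 * \<alpha>))\<^sup>2"
    using \<open>0 < \<alpha>\<close> by (simp add: power2_sum)
  then have "\<alpha>\<^sup>2 + a\<^sup>2 \<le> (\<alpha> + a\<^sup>2 / (2 * \<alpha>))\<^sup>2"
    by simp
  then have "R \<le> \<alpha> + a\<^sup>2 / (2 * \<alpha>)"
    unfolding R_def using \<open>0 < \<alpha>\<close> by (intro real_le_lsqrt) auto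
  moreover have "R * cos (\<alpha> * z - \<beta>) \<le> R"
    by (simp add: R_def mult_left_le)
  ultimately show "\<alpha> * cos (\<alpha> * z) + a * sin (\<alpha> * z) \<le> \<alpha> + a\<^sup>2 / (2 * \<alpha>)"
    unfolding phase by linarith
qed

lemma double_arctan_fixpoint_bounds:
  fixes a h \<alpha> :: real
  assumes a: "0 < a" and \<alpha>: "a < \<alpha>" "h * \<alpha> = 2 * arctan (a / \<alpha>)"
  shows "h * \<alpha>\<^sup>2 \<le> 2 * a" and "\<alpha>\<^sup>2 * (2 * a - h * \<alpha>\<^sup>2) \<le> 2 * a ^ 3 / 3"
proof -
  define u where "u = a / \<alpha>"
  have "0 < \<alpha>" "0 \<le> u" "u < 1"
    using a \<alpha> by (auto simp: u_def)
  have a_eq: "a = u * \<alpha>"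
    using \<open>0 < \<alpha>\<close> by (simp add: u_def)
  have "h * \<alpha> \<le> 2 * u"
    using arctan_le_self[OF \<open>0 \<le> u\<close>] \<alpha> by (simp add: u_def)
  from mult_right_mono[OF this, of \<alpha>] \<open>0 < \<alpha>\<close>
  show "h * \<alpha>\<^sup>2 \<le> 2 * a"
    by (simp add: a_eq power2_eq_square algebra_simps)
  have "u - u ^ 3 / 3 \<le> arctan u"
    using arctan_lower_bound[OF \<open>0 \<le> u\<close> \<open>u < 1\<close>, of 1] by (simp add: numeral_eq_Suc)
  then have "3 * (2 * u - h * \<alpha>) \<le> 2 * u ^ 3"
    using \<alpha> by (simp add: u_def)
  from mult_right_mono[OF this, of "\<alpha> ^ 3"] \<open>0 < \<alpha>\<close>
  show "\<alpha>\<^sup>2 * (2 * a - h * \<alpha>\<^sup>2) \<le> 2 * a ^ 3 / 3"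
    by (simp add: a_eq power2_eq_square power3_eq_cube algebra_simps)
qed

text \<open>The two bounds above pin \<open>h \<alpha>\<^sup>2\<close> to \<open>[4a/3, 2a]\<close>; this is what makes
  \<open>\<alpha>\<^sup>2 / (4a)\<close> an \<open>O(h \<alpha>\<^sup>2)\<close>-approximation of \<open>p / N\<close>.\<close>
lemma normalised_coefficient_numerator_bound:
  fixes a h \<alpha> p N :: real
  assumes a: "0 < a" and \<alpha>: "a < \<alpha>" and h: "0 < h"
    and X1: "h * \<alpha>\<^sup>2 \<le> 2 * a" and X2: "\<alpha>\<^sup>2 * (2 * a - h * \<alpha>\<^sup>2) \<le> 2 * a ^ 3 / 3"
    and p: "\<alpha>\<^sup>2 \<le> p" "p \<le> \<alpha>\<^sup>2 + a\<^sup>2 / 2"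
    and N: "N = 2 * a + h * (a\<^sup>2 + \<alpha>\<^sup>2)"
  shows "\<bar>4 * a * p - \<alpha>\<^sup>2 * N\<bar> \<le> \<alpha>\<^sup>2 * h * a * N"
proof -
  have N_ge: "2 * a \<le> N"
    using N h by simp
  have "a\<^sup>2 * (2 * a / 3) \<le> \<alpha>\<^sup>2 * (2 * a / 3)"
    using a \<alpha> by (intro mult_right_mono power_mono) auto
  moreover have "2 * a ^ 3 / 3 = a\<^sup>2 * (2 * a / 3)"
    by (simp add: power2_eq_square power3_eq_cube)
  ultimately have "\<alpha>\<^sup>2 * (2 * a - h * \<alpha>\<^sup>2) \<le> \<alpha>\<^sup>2 * (2 * a / 3)"
    using X2 by linarith
  then have "2 * a - h * \<alpha>\<^sup>2 \<le> 2 * a / 3"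
    by (rule mult_left_le_imp_le) (use a \<alpha> in simp)
  then have X3: "4 * a \<le> 3 * h * \<alpha>\<^sup>2"
    by simp
  have "a\<^sup>2 \<le> a * N"
    using N_ge a by (simp add: power2_eq_square)
  then have "\<alpha>\<^sup>2 * h * a\<^sup>2 \<le> \<alpha>\<^sup>2 * h * a * N"
    using h by (simp add: mult_left_mono mult.assoc)
  moreover have "4 * a * \<alpha>\<^sup>2 - \<alpha>\<^sup>2 * N = \<alpha>\<^sup>2 * (2 * a - h * \<alpha>\<^sup>2) - \<alpha>\<^sup>2 * h * a\<^sup>2"
    by (simp add: N algebra_simps power2_eq_square)
  moreover have "4 * a * \<alpha>\<^sup>2 \<le> 4 * a * p" "0 \<le> \<alpha>\<^sup>2 * (2 * a - h * \<alpha>\<^sup>2)"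
    using p a X1 by simp_all
  ultimately have lower: "- (\<alpha>\<^sup>2 * h * a * N) \<le> 4 * a * p - \<alpha>\<^sup>2 * N"
    by linarith
  have "0 \<le> \<alpha>\<^sup>2 * h * a\<^sup>2"
    using h by simp
  have "4 * a * p - \<alpha>\<^sup>2 * N \<le> 4 * a * (\<alpha>\<^sup>2 + a\<^sup>2 / 2) - \<alpha>\<^sup>2 * N"
    using p a by simp
  also have "\<dots> = \<alpha>\<^sup>2 * (2 * a - h * \<alpha>\<^sup>2) + 2 * a ^ 3 - \<alpha>\<^sup>2 * h * a\<^sup>2"
    by (simp add: N algebra_simps power2_eq_square power3_eq_cube)
  also have "\<dots> \<le> 2 * a ^ 3 / 3 + 2 * a ^ 3"
    using X2 \<open>0 \<le> \<alpha>\<^sup>2 * h * a\<^sup>2\<close> by linarith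
  also have "\<dots> = (4 * a / 3) * a * (2 * a)"
    by (simp add: power3_eq_cube)
  also have "\<dots> \<le> (h * \<alpha>\<^sup>2) * a * N"
    using X3 N_ge a by (intro mult_mono) auto
  finally show ?thesis
    using lower by (simp add: abs_le_iff algebra_simps)
qed

lemma normalised_coefficient_approx:
  fixes a h \<alpha> p N :: real
  assumes a: "0 < a" and "a < \<alpha>" and h: "0 < h"
    and "h * \<alpha>\<^sup>2 \<le> 2 * a" and "\<alpha>\<^sup>2 * (2 * a - h * \<alpha>\<^sup>2) \<le> 2 * a ^ 3 / 3"
    and "\<alpha>\<^sup>2 \<le> p" "p \<le> \<alpha>\<^sup>2 + a\<^sup>2 / 2"
    and N: "N = 2 * a + h * (a\<^sup>2 + \<alpha>\<^sup>2)"
  shows "\<bar>p / N - \<alpha>\<^sup>2 / (4 * a)\<bar> \<le> \<alpha>\<^sup>2 * (h / 4)"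
proof -
  have "0 < N"
    using N a h by (simp add: add_pos_nonneg)
  then have "p / N - \<alpha>\<^sup>2 / (4 * a) = (4 * a * p - \<alpha>\<^sup>2 * N) / (4 * a * N)"
    using a by (simp add: field_simps)
  moreover have "\<bar>4 * a * p - \<alpha>\<^sup>2 * N\<bar> \<le> (\<alpha>\<^sup>2 * (h / 4)) * (4 * a * N)"
    using normalised_coefficient_numerator_bound[OF assms] by (simp add: algebra_simps)
  ultimately show ?thesis
    using a \<open>0 < N\<close> by (simp add: abs_divide pos_divide_le_eq abs_mult)
qed

lemma P1_approx:
  assumes a: "0 < a" and h: "0 < h" "a * h \<le> 1 / 3"
    and x3: "0 \<le> x3" "x3 \<le> h" and y3: "y3 \<in> {0, h}"
  shows "\<bar>P1 a h x3 t y3 s - 2 * exp (- (alpha1 a h)\<^sup>2 * (t - s)) * ((alpha1 a h)\<^sup>2 / (4 * a))\<bar>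
     \<le> h / 2 * ((alpha1 a h)\<^sup>2 * exp (- (alpha1 a h)\<^sup>2 * (t - s)))"
proof -
  define \<alpha> where "\<alpha> = alpha1 a h"
  define e where "e = exp (- \<alpha>\<^sup>2 * (t - s))"
  define N where "N = 2 * a + h * (a\<^sup>2 + \<alpha>\<^sup>2)"
  define \<phi> where "\<phi> = \<alpha> * cos (\<alpha> * x3) + a * sin (\<alpha> * x3)"
  have "a * h < pi / 2"
    using h pi_gt3 by linarith
  then have \<alpha>: "a < \<alpha>" "h * \<alpha> = 2 * arctan (a / \<alpha>)"
    using alpha1_double_arctan[OF a h(1)] by (simp_all add: \<alpha>_def)
  have "0 < \<alpha>"
    using a \<alpha> by simp
  have "\<alpha> * cos (\<alpha> * y3) + a * sin (\<alpha> * y3) = \<alpha>"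
    using y3 eigenfunction_bounds(1)[OF a \<alpha> order_refl less_imp_le[OF h(1)]] by auto
  then have P1_eq: "P1 a h x3 t y3 s = 2 * e * (\<alpha> * \<phi> / N)"
    unfolding P1_def \<alpha>_def[symmetric] e_def[symmetric] N_def[symmetric] \<phi>_def[symmetric]
    by (simp add: algebra_simps)
  have "\<alpha> \<le> \<phi>" "\<phi> \<le> \<alpha> + a\<^sup>2 / (2 * \<alpha>)"
    using eigenfunction_bounds(2,3)[OF a \<alpha> x3] by (simp_all add: \<phi>_def)
  then have "\<alpha>\<^sup>2 \<le> \<alpha> * \<phi>" "\<alpha> * \<phi> \<le> \<alpha>\<^sup>2 + a\<^sup>2 / 2"
    using mult_left_mono[of _ _ \<alpha>] \<open>0 < \<alpha>\<close> by (auto simp: power2_eq_square field_simps)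
  then have "\<bar>\<alpha> * \<phi> / N - \<alpha>\<^sup>2 / (4 * a)\<bar> \<le> \<alpha>\<^sup>2 * (h / 4)"
    using normalised_coefficient_approx[OF a \<alpha>(1) h(1) double_arctan_fixpoint_bounds[OF a \<alpha>]]
    by (simp add: N_def)
  from mult_left_mono[OF this, of "2 * e"]
  have "\<bar>2 * e * (\<alpha> * \<phi> / N - \<alpha>\<^sup>2 / (4 * a))\<bar> \<le> h / 2 * (\<alpha>\<^sup>2 * e)"
    by (simp add: e_def abs_mult)
  moreover have "2 * e * (\<alpha> * \<phi> / N - \<alpha>\<^sup>2 / (4 * a)) = P1 a h x3 t y3 s - 2 * e * (\<alpha>\<^sup>2 / (4 * a))"
    by (simp add: P1_eq algebra_simps)
  ultimately show ?thesis
    by (simp add: \<alpha>_def e_def)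
qed

section \<open>A maximum principle for the Neumann heat equation\<close>

lemma DERIV_left_local_max_nonneg:
  fixes f :: "real \<Rightarrow> real"
  assumes f: "(f has_real_derivative f') (at t)" and "s < t"
    and max: "\<And>\<tau>. s < \<tau> \<Longrightarrow> \<tau> \<le> t \<Longrightarrow> f \<tau> \<le> f t"
  shows "0 \<le> f'"
proof (rule ccontr)
  assume "\<not> 0 \<le> f'"
  then obtain d where "0 < d" and dec: "\<And>h. 0 < h \<Longrightarrow> h < d \<Longrightarrow> f t < f (t - h)"
    using DERIV_neg_dec_left[OF f] by force
  define h where "h = min d (t - s) / 2"
  have "0 < h" "h < d" "h < t - s"
    using \<open>0 < d\<close> \<open>s < t\<close> by (auto simp: h_def)
  then show False
    using dec[of h] max[of "t - h"] by simp
qed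

lemma DERIV_local_max_second_nonpos:
  fixes f f' :: "real \<Rightarrow> real"
  assumes d: "0 < \<delta>" and f: "\<And>r. \<bar>r\<bar> < \<delta> \<Longrightarrow> (f has_real_derivative f' r) (at r)"
    and f': "(f' has_real_derivative c) (at 0)" and max: "\<And>r. \<bar>r\<bar> < \<delta> \<Longrightarrow> f r \<le> f 0"
  shows "c \<le> 0"
proof (rule ccontr)
  assume "\<not> c \<le> 0"
  have "f' 0 = 0"
    by (rule DERIV_local_max[OF f[of 0] d]) (use d max in auto)
  obtain e where "0 < e" and inc: "\<And>h. 0 < h \<Longrightarrow> h < e \<Longrightarrow> f' 0 < f' (0 + h)"
    using DERIV_pos_inc_right[OF f'] \<open>\<not> c \<le> 0\<close> by force
  define r where "r = min e \<delta> / 2"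
  have r: "0 < r" "r < e" "r < \<delta>"
    using \<open>0 < e\<close> d by (auto simp: r_def)
  obtain z where z: "0 < z" "z < r" "f r - f 0 = (r - 0) * f' z"
    using MVT2[OF r(1), of f f'] f r by force
  have "0 < f' z"
    using inc[of z] z r \<open>f' 0 = 0\<close> by simp
  then have "0 < r * f' z"
    using r(1) by simp
  moreover have "f r - f 0 = r * f' z"
    using z by simp
  ultimately have "f 0 < f r"
    by linarith
  moreover have "f r \<le> f 0"
    using max[of r] r by simp
  ultimately show False
    by simp
qed

lemma local_max_hessian_diag_nonpos:
  fixes f :: "real^'n \<Rightarrow> real" and G :: "real^'n \<Rightarrow> real^'n"
  assumes d: "0 < \<delta>" and f: "\<And>y. y \<in> ball x \<delta> \<Longrightarrow> (f has_derivative (\<lambda>v. G y \<bullet> v)) (at y)"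
    and G: "((\<lambda>y. G y $ i) has_derivative L) (at x)"
    and max: "\<And>y. y \<in> ball x \<delta> \<Longrightarrow> f y \<le> f x"
  shows "L (axis i 1) \<le> 0"
proof -
  define \<gamma> where "\<gamma> r = x + r *\<^sub>R axis i (1::real)" for r :: real
  have \<gamma>_in: "\<gamma> r \<in> ball x \<delta>" if "\<bar>r\<bar> < \<delta>" for r
    using that by (simp add: \<gamma>_def dist_norm)
  have d\<gamma>: "(\<gamma> has_derivative (\<lambda>r. r *\<^sub>R axis i 1)) (at r)" for r
    unfolding \<gamma>_def by (auto intro!: derivative_eq_intros)
  show ?thesis
  proof (rule DERIV_local_max_second_nonpos[OF d])
    fix r :: real assume "\<bar>r\<bar> < \<delta>"
    then have "(f has_derivative (\<lambda>v. G (\<gamma> r) \<bullet> v)) (at (\<gamma> r))"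
      using f \<gamma>_in by blast
    from diff_chain_at[OF d\<gamma> this]
    show "((\<lambda>r. f (\<gamma> r)) has_real_derivative G (\<gamma> r) $ i) (at r)"
      by (simp add: has_field_derivative_def o_def inner_axis mult_commute_abs)
  next
    have "((\<lambda>y. G y $ i) has_derivative L) (at (\<gamma> 0))"
      using G by (simp add: \<gamma>_def)
    from diff_chain_at[OF d\<gamma> this]
    show "((\<lambda>r. G (\<gamma> r) $ i) has_real_derivative L (axis i 1)) (at 0)"
      by (simp add: has_field_derivative_def o_def linear_scale[OF has_derivative_linear[OF G]]
          mult_commute_abs)
  next
    fix r :: real assume "\<bar>r\<bar> < \<delta>"
    then show "f (\<gamma> r) \<le> f (\<gamma> 0)"
      using max \<gamma>_in by (simp add: \<gamma>_def)
  qed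
qed

lemma continuous_on_initial_extension:
  fixes u :: "'a::metric_space \<Rightarrow> real \<Rightarrow> real"
  assumes A: "closed A"
    and cu: "continuous_on (A \<times> {s<..}) (\<lambda>(x,t). u x t)"
    and lim: "\<And>x0. x0 \<in> A \<Longrightarrow> ((\<lambda>(x,t). u x t) \<longlongrightarrow> g x0) (at (x0, s) within A \<times> {s<..})"
    and cg: "continuous_on A g"
  shows "continuous_on (A \<times> {s..T}) (\<lambda>(x,t). if t = s then g x else u x t)"
  unfolding continuous_on_def
proof (intro ballI)
  define e where "e = (\<lambda>(x,t). if t = s then g x else u x t)"
  fix p assume p: "p \<in> A \<times> {s..T}"
  obtain x0 t0 where p0: "p = (x0, t0)" by (cases p)
  have x0: "x0 \<in> A" and t0: "s \<le> t0" "t0 \<le> T" using p p0 by auto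
  have split: "A \<times> {s..T} = A \<times> {s} \<union> A \<times> {s<..T}"
    using t0 by auto
  have initial: "(e \<longlongrightarrow> e p) (at p within A \<times> {s})"
  proof (cases "t0 = s")
    case True
    have "continuous_on (A \<times> {s}) (\<lambda>q. g (fst q))"
      by (rule continuous_on_compose2[OF cg continuous_on_fst]) auto
    then have "((\<lambda>q. g (fst q)) \<longlongrightarrow> g (fst p)) (at p within A \<times> {s})"
      using p True p0 unfolding continuous_on_def by auto
    then show ?thesis
      using True p0 by (subst Lim_cong_within[where g="\<lambda>q. g (fst q)"]) (auto simp: e_def)
  next
    case False
    have "\<not> p islimpt (A \<times> {s})"
      using closed_limpt[of "A \<times> {s}"] closed_Times[OF A closed_singleton] False p0 by auto
    then have "at p within A \<times> {s} = bot"
      using trivial_limit_within by blast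
    then show ?thesis
      by simp
  qed
  have "((\<lambda>(x,t). u x t) \<longlongrightarrow> e p) (at p within A \<times> {s<..})"
  proof (cases "t0 = s")
    case True
    then show ?thesis using lim x0 p0 by (simp add: e_def)
  next
    case False
    then have "p \<in> A \<times> {s<..}" using p0 x0 t0 by auto
    then show ?thesis
      using cu False p0 unfolding continuous_on_def by (auto simp: e_def)
  qed
  then have "((\<lambda>(x,t). u x t) \<longlongrightarrow> e p) (at p within A \<times> {s<..T})"
    by (rule tendsto_within_subset) auto
  then have later: "(e \<longlongrightarrow> e p) (at p within A \<times> {s<..T})"
    by (subst Lim_cong_within[where g="\<lambda>(x,t). u x t"]) (auto simp: e_def)
  show "(e \<longlongrightarrow> e p) (at p within A \<times> {s..T})"
    using initial later unfolding split Lim_within_Un by blast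
qed

lemma has_derivative_partials_grad:
  fixes f :: "real^2 \<Rightarrow> real"
  assumes "(f has_derivative (\<lambda>v. \<Sum>i\<in>UNIV. v $ i * d i)) (at x)"
  shows "grad f x = (\<chi> i. d i)" and "(f has_derivative (\<lambda>v. v \<bullet> grad f x)) (at x)"
proof -
  have "(\<Sum>j\<in>UNIV. axis i 1 $ j * d j) = d i" for i
  proof -
    have "(\<Sum>j\<in>UNIV. axis i 1 $ j * d j) = (\<Sum>j\<in>UNIV. if j = i then d j else 0)"
      by (rule sum.cong) (auto simp: axis_def)
    then show ?thesis by simp
  qed
  then show grad_eq: "grad f x = (\<chi> i. d i)"
    unfolding grad_def frechet_derivative_at[OF assms, symmetric] by simp
  show "(f has_derivative (\<lambda>v. v \<bullet> grad f x)) (at x)"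
    using assms unfolding grad_eq by (simp add: inner_vec_def)
qed

lemma smooth_domainE:
  assumes "smooth_domain P \<rho>"
  obtains D where "D [] = \<rho>"
    and "\<And>js x. (D js has_derivative (\<lambda>v. \<Sum>i\<in>UNIV. v $ i * D (i # js) x)) (at x)"
proof -
  have "smooth_R2 \<rho>"
    using assms by (simp add: smooth_domain_def)
  then obtain D :: "2 list \<Rightarrow> real^2 \<Rightarrow> real" where "D [] = \<rho>"
    and "\<And>js x. (D js has_derivative (\<lambda>v. \<Sum>i\<in>UNIV. v $ i * D (i # js) x)) (at x)"
    unfolding smooth_R2_def by blast
  then show thesis
    by (rule that)
qed

lemma smooth_domain_continuous:
  assumes "smooth_domain P \<rho>"
  shows "continuous_on UNIV \<rho>"
proof -
  obtain D :: "2 list \<Rightarrow> real^2 \<Rightarrow> real" where "D [] = \<rho>"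
    and "\<And>js x. (D js has_derivative (\<lambda>v. \<Sum>i\<in>UNIV. v $ i * D (i # js) x)) (at x)"
    using smooth_domainE[OF assms] by blast
  then have "continuous_on UNIV (D [])"
    by (intro has_derivative_continuous_on) (auto intro: has_derivative_at_withinI)
  then show ?thesis
    using \<open>D [] = \<rho>\<close> by simp
qed

lemma smooth_domain_open:
  assumes "smooth_domain P \<rho>"
  shows "open P"
proof -
  have "open {x. \<rho> x < 0}"
    by (rule open_Collect_less[OF smooth_domain_continuous[OF assms] continuous_on_const])
  then show ?thesis
    using assms by (simp add: smooth_domain_def)
qed

lemma smooth_domain_closure_subset:
  assumes "smooth_domain P \<rho>"
  shows "closure P \<subseteq> {x. \<rho> x \<le> 0}"
proof (rule closure_minimal)
  show "P \<subseteq> {x. \<rho> x \<le> 0}"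
    using assms by (auto simp: smooth_domain_def)
  show "closed {x. \<rho> x \<le> 0}"
    by (rule closed_Collect_le[OF smooth_domain_continuous[OF assms] continuous_on_const])
qed

lemma smooth_domain_compact_closure:
  assumes "smooth_domain P \<rho>"
  shows "compact (closure P)"
  using assms compact_closure unfolding smooth_domain_def by blast

lemma neumann_heat_solution_initial:
  assumes "neumann_heat_solution P \<rho> s g u"
  shows "continuous_on (closure P \<times> {s<..}) (\<lambda>(x,t). u x t)"
    and "\<And>x0. x0 \<in> closure P \<Longrightarrow>
      ((\<lambda>(x,t). u x t) \<longlongrightarrow> g x0) (at (x0, s) within closure P \<times> {s<..})"
  using assms unfolding neumann_heat_solution_def by blast+

lemma neumann_heat_solutionE:
  assumes "neumann_heat_solution P \<rho> s g u"
  obtains ut gr H where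
    "\<And>x t. x \<in> P \<Longrightarrow> s < t \<Longrightarrow> ((\<lambda>\<tau>. u x \<tau>) has_real_derivative ut x t) (at t)"
    "\<And>x t. x \<in> P \<Longrightarrow> s < t \<Longrightarrow> ((\<lambda>y. u y t) has_derivative (\<lambda>v. gr x t \<bullet> v)) (at x)"
    "\<And>x t. x \<in> P \<Longrightarrow> s < t \<Longrightarrow> ((\<lambda>y. gr y t) has_derivative (\<lambda>v. H x t *v v)) (at x)"
    "\<And>x t. x \<in> P \<Longrightarrow> s < t \<Longrightarrow> ut x t = (\<Sum>i\<in>UNIV. H x t $ i $ i)"
    "\<And>x t. x \<in> frontier P \<Longrightarrow> s < t \<Longrightarrow>
       ((\<lambda>r. (u (x - r *\<^sub>R outer_normal \<rho> x) t - u x t) / r) \<longlongrightarrow> 0) (at_right 0)"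
proof -
  from assms obtain ut gr H where
    "\<forall>x\<in>P. \<forall>t>s. ((\<lambda>\<tau>. u x \<tau>) has_real_derivative ut x t) (at t) \<and>
       ((\<lambda>y. u y t) has_derivative (\<lambda>v. gr x t \<bullet> v)) (at x) \<and>
       ((\<lambda>y. gr y t) has_derivative (\<lambda>v. H x t *v v)) (at x) \<and>
       ut x t = (\<Sum>i\<in>UNIV. H x t $ i $ i)"
    unfolding neumann_heat_solution_def by blast
  moreover have "\<forall>x\<in>frontier P. \<forall>t>s.
      ((\<lambda>r. (u (x - r *\<^sub>R outer_normal \<rho> x) t - u x t) / r) \<longlongrightarrow> 0) (at_right 0)"
    using assms unfolding neumann_heat_solution_def by blast
  ultimately show ?thesis
    using that[of ut gr H] by blast
qed

text \<open>At an interior space-time maximum of \<open>u - \<epsilon> \<rho> - \<epsilon> C t\<close> one would get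
  \<open>\<epsilon> C \<le> u\<^sub>t = \<Delta>u \<le> \<epsilon> \<Delta>\<rho> < \<epsilon> C\<close>.\<close>
lemma perturbed_heat_no_interior_max:
  fixes u :: "real^2 \<Rightarrow> real \<Rightarrow> real" and D :: "2 list \<Rightarrow> real^2 \<Rightarrow> real"
  assumes "0 < \<delta>" "s < tm" "0 < \<epsilon>"
    and ut: "((\<lambda>\<tau>. u xm \<tau>) has_real_derivative ut) (at tm)"
    and ux: "\<And>y. y \<in> ball xm \<delta> \<Longrightarrow> ((\<lambda>y. u y tm) has_derivative (\<lambda>v. gr y \<bullet> v)) (at y)"
    and gr: "(gr has_derivative (\<lambda>v. H *v v)) (at xm)"
    and heat: "ut = (\<Sum>i\<in>UNIV. H $ i $ i)"
    and dD: "\<And>js x. (D js has_derivative (\<lambda>v. \<Sum>i\<in>UNIV. v $ i * D (i # js) x)) (at x)"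
    and lap: "(\<Sum>i\<in>UNIV. D [i, i] xm) < C"
    and max_t: "\<And>\<tau>. s < \<tau> \<Longrightarrow> \<tau> \<le> tm \<Longrightarrow> u xm \<tau> - \<epsilon> * C * \<tau> \<le> u xm tm - \<epsilon> * C * tm"
    and max_x: "\<And>y. y \<in> ball xm \<delta> \<Longrightarrow> u y tm - \<epsilon> * D [] y \<le> u xm tm - \<epsilon> * D [] xm"
  shows False
proof -
  have "((\<lambda>\<tau>. u xm \<tau> - \<epsilon> * C * \<tau>) has_real_derivative ut - \<epsilon> * C) (at tm)"
    using ut by (auto intro!: derivative_eq_intros)
  then have "0 \<le> ut - \<epsilon> * C"
    by (rule DERIV_left_local_max_nonneg[OF _ \<open>s < tm\<close>]) (simp add: max_t)
  have hess: "H $ i $ i \<le> \<epsilon> * D [i, i] xm" for i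
  proof -
    define G where "G y = gr y - \<epsilon> *\<^sub>R (\<chi> j. D [j] y)" for y
    have "(\<lambda>v. (H *v v) $ i - \<epsilon> * (\<Sum>j\<in>UNIV. v $ j * D [j, i] xm)) (axis i 1) \<le> 0"
    proof (rule local_max_hessian_diag_nonpos[OF \<open>0 < \<delta>\<close>,
        where f="\<lambda>y. u y tm - \<epsilon> * D [] y" and G=G])
      fix y assume "y \<in> ball xm \<delta>"
      then show "((\<lambda>y. u y tm - \<epsilon> * D [] y) has_derivative (\<lambda>v. G y \<bullet> v)) (at y)"
        using ux has_derivative_partials_grad[OF dD[of "[]" y]]
        by (auto intro!: derivative_eq_intros
            simp: G_def inner_diff_right inner_commute has_derivative_partials_grad(1)[OF dD[of "[]" y]])
    next
      have "((\<lambda>y. gr y $ i) has_derivative (\<lambda>v. (H *v v) $ i)) (at xm)"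
        using bounded_linear.has_derivative[OF bounded_linear_vec_nth gr] .
      then show "((\<lambda>y. G y $ i) has_derivative
          (\<lambda>v. (H *v v) $ i - \<epsilon> * (\<Sum>j\<in>UNIV. v $ j * D [j, i] xm))) (at xm)"
        using dD[of "[i]" xm] by (auto intro!: derivative_eq_intros simp: G_def)
    qed (use max_x in simp)
    moreover have "(\<Sum>j\<in>UNIV. axis i 1 $ j * D [j, i] xm) = D [i, i] xm"
    proof -
      have "(\<Sum>j\<in>UNIV. axis i 1 $ j * D [j, i] xm) = (\<Sum>j\<in>UNIV. if j = i then D [j, i] xm else 0)"
        by (rule sum.cong) (auto simp: axis_def)
      then show ?thesis by simp
    qed
    ultimately show ?thesis
      by (simp add: matrix_vector_mult_basis column_def)
  qed
  have "ut \<le> \<epsilon> * (\<Sum>i\<in>UNIV. D [i, i] xm)"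
    unfolding heat sum_distrib_left by (rule sum_mono) (rule hess)
  also have "\<dots> < \<epsilon> * C"
    using lap \<open>0 < \<epsilon>\<close> by simp
  finally show False
    using \<open>0 \<le> ut - \<epsilon> * C\<close> by simp
qed

text \<open>At a boundary point \<open>\<rho>\<close> decreases strictly in the inward normal direction while
  the normal derivative of the solution vanishes, so \<open>f - \<epsilon> \<rho>\<close> increases strictly
  when entering the domain.\<close>
lemma neumann_boundary_not_max:
  fixes f \<rho> :: "real^2 \<Rightarrow> real"
  assumes P: "P = {x. \<rho> x < 0}" and "\<rho> x = 0" "grad \<rho> x \<noteq> 0"
    and d\<rho>: "(\<rho> has_derivative (\<lambda>v. v \<bullet> grad \<rho> x)) (at x)"
    and neu: "((\<lambda>r. (f (x - r *\<^sub>R outer_normal \<rho> x) - f x) / r) \<longlongrightarrow> 0) (at_right 0)"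
    and "0 < \<epsilon>"
  obtains y where "y \<in> P" "f x - \<epsilon> * \<rho> x < f y - \<epsilon> * \<rho> y"
proof -
  define n where "n = outer_normal \<rho> x"
  have "n \<bullet> grad \<rho> x = norm (grad \<rho> x)"
    using \<open>grad \<rho> x \<noteq> 0\<close>
    by (simp add: n_def outer_normal_def power2_norm_eq_inner[symmetric] power2_eq_square)
  then have "(\<lambda>r. - (r *\<^sub>R n) \<bullet> grad \<rho> x) = (*) (- norm (grad \<rho> x))"
    by (auto simp: fun_eq_iff)
  moreover have "((\<lambda>r. x - r *\<^sub>R n) has_derivative (\<lambda>r. - (r *\<^sub>R n))) (at 0)"
    by (auto intro!: derivative_eq_intros)
  moreover have "(\<rho> has_derivative (\<lambda>v. v \<bullet> grad \<rho> x)) (at ((\<lambda>r. x - r *\<^sub>R n) 0))"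
    using d\<rho> by simp
  ultimately have "((\<lambda>r. \<rho> (x - r *\<^sub>R n)) has_real_derivative - norm (grad \<rho> x)) (at 0)"
    using diff_chain_at by (fastforce simp: has_field_derivative_def o_def)
  then have "((\<lambda>r. (\<rho> (x - r *\<^sub>R n) - \<rho> x) / r) \<longlongrightarrow> - norm (grad \<rho> x)) (at 0)"
    unfolding DERIV_def by simp
  then have \<rho>_quot: "((\<lambda>r. (\<rho> (x - r *\<^sub>R n) - \<rho> x) / r) \<longlongrightarrow> - norm (grad \<rho> x)) (at_right 0)"
    by (rule tendsto_within_subset) simp
  have "((\<lambda>r. (f (x - r *\<^sub>R n) - f x) / r - \<epsilon> * ((\<rho> (x - r *\<^sub>R n) - \<rho> x) / r))
      \<longlongrightarrow> 0 - \<epsilon> * (- norm (grad \<rho> x))) (at_right 0)"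
    using neu \<rho>_quot by (intro tendsto_intros) (simp_all add: n_def)
  moreover have "0 < 0 - \<epsilon> * (- norm (grad \<rho> x))"
    using \<open>0 < \<epsilon>\<close> \<open>grad \<rho> x \<noteq> 0\<close> by simp
  ultimately have "\<forall>\<^sub>F r in at_right 0.
      0 < (f (x - r *\<^sub>R n) - f x) / r - \<epsilon> * ((\<rho> (x - r *\<^sub>R n) - \<rho> x) / r)"
    by (rule order_tendstoD(1))
  moreover have "\<forall>\<^sub>F r in at_right 0. (\<rho> (x - r *\<^sub>R n) - \<rho> x) / r < 0"
    using \<rho>_quot \<open>grad \<rho> x \<noteq> 0\<close> by (auto intro: order_tendstoD(2))
  moreover have "\<forall>\<^sub>F r in at_right 0. (0::real) < r"
    by (rule eventually_at_right_less)
  ultimately obtain r :: real where r: "0 < r"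
      "0 < (f (x - r *\<^sub>R n) - f x) / r - \<epsilon> * ((\<rho> (x - r *\<^sub>R n) - \<rho> x) / r)"
      "(\<rho> (x - r *\<^sub>R n) - \<rho> x) / r < 0"
    using eventually_happens'[OF trivial_limit_at_right_real eventually_conj[OF _ eventually_conj]]
    by blast
  define y where "y = x - r *\<^sub>R n"
  have "(f y - f x) / r - \<epsilon> * ((\<rho> y - \<rho> x) / r) = ((f y - \<epsilon> * \<rho> y) - (f x - \<epsilon> * \<rho> x)) / r"
    using \<open>0 < r\<close> by (simp add: field_simps)
  then have "f x - \<epsilon> * \<rho> x < f y - \<epsilon> * \<rho> y"
    using r(1,2) by (simp add: y_def zero_less_divide_iff)
  moreover have "y \<in> P"
    using r(1,3) \<open>\<rho> x = 0\<close> by (simp add: y_def P divide_less_0_iff)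
  ultimately show ?thesis
    using that by blast
qed

lemma neumann_heat_perturbed_no_later_max:
  fixes u :: "real^2 \<Rightarrow> real \<Rightarrow> real" and D :: "2 list \<Rightarrow> real^2 \<Rightarrow> real"
  assumes sd: "smooth_domain P \<rho>" and sol: "neumann_heat_solution P \<rho> s g u"
    and D0: "D [] = \<rho>"
    and dD: "\<And>js x. (D js has_derivative (\<lambda>v. \<Sum>i\<in>UNIV. v $ i * D (i # js) x)) (at x)"
    and C: "\<And>x. x \<in> closure P \<Longrightarrow> (\<Sum>i\<in>UNIV. D [i, i] x) < C"
    and "0 < \<epsilon>" and "s < tm" and "xm \<in> closure P"
    and max: "\<And>y \<tau>. y \<in> closure P \<Longrightarrow> s < \<tau> \<Longrightarrow> \<tau> \<le> tm \<Longrightarrow>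
      u y \<tau> - \<epsilon> * \<rho> y - \<epsilon> * C * \<tau> \<le> u xm tm - \<epsilon> * \<rho> xm - \<epsilon> * C * tm"
  shows False
proof -
  obtain ut gr H
    where ut: "\<And>x t. x \<in> P \<Longrightarrow> s < t \<Longrightarrow> ((\<lambda>\<tau>. u x \<tau>) has_real_derivative ut x t) (at t)"
    and ux: "\<And>x t. x \<in> P \<Longrightarrow> s < t \<Longrightarrow> ((\<lambda>y. u y t) has_derivative (\<lambda>v. gr x t \<bullet> v)) (at x)"
    and gr: "\<And>x t. x \<in> P \<Longrightarrow> s < t \<Longrightarrow> ((\<lambda>y. gr y t) has_derivative (\<lambda>v. H x t *v v)) (at x)"
    and heat: "\<And>x t. x \<in> P \<Longrightarrow> s < t \<Longrightarrow> ut x t = (\<Sum>i\<in>UNIV. H x t $ i $ i)"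
    and neu: "\<And>x t. x \<in> frontier P \<Longrightarrow> s < t \<Longrightarrow>
       ((\<lambda>r. (u (x - r *\<^sub>R outer_normal \<rho> x) t - u x t) / r) \<longlongrightarrow> 0) (at_right 0)"
    using neumann_heat_solutionE[OF sol] by blast
  show False
  proof (cases "xm \<in> P")
    case True
    obtain \<delta> where "0 < \<delta>" "ball xm \<delta> \<subseteq> P"
      using smooth_domain_open[OF sd] True open_contains_ball by blast
    have ux': "((\<lambda>y. u y tm) has_derivative (\<lambda>v. gr y tm \<bullet> v)) (at y)" if "y \<in> ball xm \<delta>" for y
      using ux \<open>s < tm\<close> \<open>ball xm \<delta> \<subseteq> P\<close> that by blast
    have max_t: "u xm \<tau> - \<epsilon> * C * \<tau> \<le> u xm tm - \<epsilon> * C * tm" if "s < \<tau>" "\<tau> \<le> tm" for \<tau>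
      using max[OF \<open>xm \<in> closure P\<close> that] by simp
    have max_x: "u y tm - \<epsilon> * D [] y \<le> u xm tm - \<epsilon> * D [] xm" if "y \<in> ball xm \<delta>" for y
      using max[of y tm] that \<open>ball xm \<delta> \<subseteq> P\<close> closure_subset \<open>s < tm\<close> by (force simp: D0)
    show False
      by (rule perturbed_heat_no_interior_max[OF \<open>0 < \<delta>\<close> \<open>s < tm\<close> \<open>0 < \<epsilon>\<close>
            ut[OF True \<open>s < tm\<close>] ux' gr[OF True \<open>s < tm\<close>] heat[OF True \<open>s < tm\<close>] dD
            C[OF \<open>xm \<in> closure P\<close>] max_t max_x])
  next
    case False
    have P_eq: "P = {x. \<rho> x < 0}" and grad_ne: "\<And>x. \<rho> x = 0 \<Longrightarrow> grad \<rho> x \<noteq> 0"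
      using sd unfolding smooth_domain_def by blast+
    have "xm \<in> frontier P"
      using \<open>xm \<in> closure P\<close> False smooth_domain_open[OF sd] by (simp add: frontier_def interior_open)
    moreover have "\<rho> xm = 0"
      using \<open>xm \<in> closure P\<close> False smooth_domain_closure_subset[OF sd] P_eq by force
    moreover have "(\<rho> has_derivative (\<lambda>v. v \<bullet> grad \<rho> xm)) (at xm)"
      using has_derivative_partials_grad(2)[OF dD[of "[]" xm]] by (simp add: D0)
    ultimately obtain y where "y \<in> P" "u xm tm - \<epsilon> * \<rho> xm < u y tm - \<epsilon> * \<rho> y"
      using neumann_boundary_not_max[OF P_eq _ _ _ neu[OF _ \<open>s < tm\<close>] \<open>0 < \<epsilon>\<close>] grad_ne by blast
    then show False
      using max[of y tm] closure_subset \<open>s < tm\<close> by force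
  qed
qed

lemma neumann_heat_perturbed_max_initial:
  fixes u :: "real^2 \<Rightarrow> real \<Rightarrow> real" and D :: "2 list \<Rightarrow> real^2 \<Rightarrow> real"
  assumes sd: "smooth_domain P \<rho>" and sol: "neumann_heat_solution P \<rho> s g u"
    and cg: "continuous_on (closure P) g"
    and D0: "D [] = \<rho>"
    and dD: "\<And>js x. (D js has_derivative (\<lambda>v. \<Sum>i\<in>UNIV. v $ i * D (i # js) x)) (at x)"
    and C: "\<And>x. x \<in> closure P \<Longrightarrow> (\<Sum>i\<in>UNIV. D [i, i] x) < C"
    and "0 < \<epsilon>" and "s < \<tau>\<^sub>0"
  obtains xm where "xm \<in> closure P"
    and "\<And>y \<tau>. y \<in> closure P \<Longrightarrow> s < \<tau> \<Longrightarrow> \<tau> \<le> \<tau>\<^sub>0 \<Longrightarrow>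
      u y \<tau> - \<epsilon> * \<rho> y - \<epsilon> * C * \<tau> \<le> g xm - \<epsilon> * \<rho> xm - \<epsilon> * C * s"
proof -
  define K where "K = closure P \<times> {s..\<tau>\<^sub>0}"
  define w where "w = (\<lambda>(y,\<tau>). (if \<tau> = s then g y else u y \<tau>) - \<epsilon> * \<rho> y - \<epsilon> * C * \<tau>)"
  have "continuous_on K (\<lambda>(y,\<tau>). if \<tau> = s then g y else u y \<tau>)"
    unfolding K_def
    by (rule continuous_on_initial_extension[OF _ neumann_heat_solution_initial[OF sol] cg]) simp_all
  moreover have "continuous_on K (\<lambda>p. \<rho> (fst p))"
    by (rule continuous_on_compose2[OF smooth_domain_continuous[OF sd] continuous_on_fst]) auto
  ultimately have "continuous_on K (\<lambda>p. (\<lambda>(y,\<tau>). if \<tau> = s then g y else u y \<tau>) p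
      - \<epsilon> * \<rho> (fst p) - (\<epsilon> * C) * snd p)"
    by (intro continuous_on_diff continuous_on_mult_left continuous_on_snd continuous_on_id)
  moreover have "w = (\<lambda>p. (\<lambda>(y,\<tau>). if \<tau> = s then g y else u y \<tau>) p - \<epsilon> * \<rho> (fst p) - (\<epsilon> * C) * snd p)"
    by (auto simp: w_def fun_eq_iff)
  ultimately have "continuous_on K w"
    by simp
  moreover have "compact K"
    unfolding K_def by (intro compact_Times smooth_domain_compact_closure[OF sd] compact_Icc)
  moreover obtain y0 where "y0 \<in> P"
    using sd unfolding smooth_domain_def by blast
  then have "(y0, s) \<in> K"
    using closure_subset \<open>s < \<tau>\<^sub>0\<close> by (auto simp: K_def)
  ultimately obtain p where "p \<in> K" "\<forall>q\<in>K. w q \<le> w p"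
    using continuous_attains_sup[of K w] by blast
  moreover obtain xm tm where "p = (xm, tm)"
    by (cases p)
  ultimately have max: "(xm, tm) \<in> K" "\<And>q. q \<in> K \<Longrightarrow> w q \<le> w (xm, tm)"
    by simp_all
  then have "xm \<in> closure P" "s \<le> tm" "tm \<le> \<tau>\<^sub>0"
    by (auto simp: K_def)
  have "tm = s"
  proof (rule ccontr)
    assume "tm \<noteq> s"
    show False
    proof (rule neumann_heat_perturbed_no_later_max[OF sd sol D0 dD C \<open>0 < \<epsilon>\<close> _ \<open>xm \<in> closure P\<close>])
      show "s < tm"
        using \<open>s \<le> tm\<close> \<open>tm \<noteq> s\<close> by simp
      fix y \<tau> assume "y \<in> closure P" "s < \<tau>" "\<tau> \<le> tm"
      then show "u y \<tau> - \<epsilon> * \<rho> y - \<epsilon> * C * \<tau> \<le> u xm tm - \<epsilon> * \<rho> xm - \<epsilon> * C * tm"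
        using max(2)[of "(y, \<tau>)"] \<open>tm \<le> \<tau>\<^sub>0\<close> \<open>tm \<noteq> s\<close> by (simp add: K_def w_def)
    qed
  qed
  show ?thesis
  proof (rule that[OF \<open>xm \<in> closure P\<close>])
    fix y \<tau> assume "y \<in> closure P" "s < \<tau>" "\<tau> \<le> \<tau>\<^sub>0"
    then show "u y \<tau> - \<epsilon> * \<rho> y - \<epsilon> * C * \<tau> \<le> g xm - \<epsilon> * \<rho> xm - \<epsilon> * C * s"
      using max(2)[of "(y, \<tau>)"] \<open>tm = s\<close> by (simp add: K_def w_def)
  qed
qed

lemma neumann_heat_solution_le:
  assumes sd: "smooth_domain P \<rho>" and sol: "neumann_heat_solution P \<rho> s g u"
    and cg: "continuous_on (closure P) g" and g_le: "\<And>y. y \<in> closure P \<Longrightarrow> g y \<le> G"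
    and y: "y \<in> closure P" and "s < \<tau>"
  shows "u y \<tau> \<le> G"
proof -
  obtain D :: "2 list \<Rightarrow> real^2 \<Rightarrow> real" where D0: "D [] = \<rho>"
    and dD: "\<And>js x. (D js has_derivative (\<lambda>v. \<Sum>i\<in>UNIV. v $ i * D (i # js) x)) (at x)"
    using smooth_domainE[OF sd] by blast
  have "continuous_on (closure P) (D js)" for js
    using dD by (intro has_derivative_continuous_on) (auto intro: has_derivative_at_withinI)
  then have "continuous_on (closure P) (\<lambda>x. \<Sum>i\<in>UNIV. D [i, i] x)"
    by (intro continuous_on_sum)
  then obtain B where B: "\<And>x. x \<in> closure P \<Longrightarrow> norm (\<Sum>i\<in>UNIV. D [i, i] x) \<le> B"
    using continuous_on_compact_bound[OF smooth_domain_compact_closure[OF sd]] by blast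
  obtain R where R: "\<And>x. x \<in> closure P \<Longrightarrow> norm (\<rho> x) \<le> R"
    using continuous_on_compact_bound[OF smooth_domain_compact_closure[OF sd]
        continuous_on_subset[OF smooth_domain_continuous[OF sd] subset_UNIV]] by blast
  define C where "C = B + 1"
  have C: "(\<Sum>i\<in>UNIV. D [i, i] x) < C" if "x \<in> closure P" for x
    using B[OF that] by (simp add: C_def abs_le_iff)
  define M where "M = 2 * R + \<bar>C\<bar> * (\<tau> - s)"
  have bound: "u y \<tau> \<le> G + \<epsilon> * M" if eps: "0 < \<epsilon>" for \<epsilon>
  proof -
    obtain xm where xm: "xm \<in> closure P" and max: "\<And>y' \<tau>'. y' \<in> closure P \<Longrightarrow> s < \<tau>' \<Longrightarrow>
        \<tau>' \<le> \<tau> \<Longrightarrow> u y' \<tau>' - \<epsilon> * \<rho> y' - \<epsilon> * C * \<tau>' \<le> g xm - \<epsilon> * \<rho> xm - \<epsilon> * C * s"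
      using neumann_heat_perturbed_max_initial[OF sd sol cg D0 dD C eps \<open>s < \<tau>\<close>] by blast
    have "u y \<tau> \<le> g xm + \<epsilon> * (\<rho> y - \<rho> xm) + \<epsilon> * (C * (\<tau> - s))"
      using max[OF y \<open>s < \<tau>\<close> order_refl] by (simp add: algebra_simps)
    also have "\<dots> \<le> G + \<epsilon> * (2 * R) + \<epsilon> * (\<bar>C\<bar> * (\<tau> - s))"
    proof (intro add_mono mult_left_mono)
      show "\<rho> y - \<rho> xm \<le> 2 * R"
        using R[OF y] R[OF xm] by simp
      show "C * (\<tau> - s) \<le> \<bar>C\<bar> * (\<tau> - s)"
        using \<open>s < \<tau>\<close> by (intro mult_right_mono) simp_all
    qed (use g_le[OF xm] eps in simp_all)
    finally show ?thesis
      by (simp add: M_def algebra_simps)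
  qed
  have "((\<lambda>\<epsilon>. G + \<epsilon> * M) \<longlongrightarrow> G) (at_right 0)"
    by (auto intro!: tendsto_eq_intros)
  moreover have "\<forall>\<^sub>F \<epsilon> in at_right 0. u y \<tau> \<le> G + \<epsilon> * M"
    using eventually_at_right_less by (rule eventually_mono) (rule bound)
  ultimately show ?thesis
    by (rule tendsto_lowerbound) simp
qed

section \<open>The Neumann heat kernel\<close>

lemma neumann_heat_kernel_set_integrable:
  assumes "neumann_heat_kernel P \<rho> W" "continuous_on (closure P) g" "x \<in> closure P" "s < t"
  shows "set_integrable lborel P (\<lambda>y. W x t y s * g y)"
  using assms unfolding neumann_heat_kernel_def by blast

lemma neumann_heat_kernel_integral_le:
  assumes sd: "smooth_domain P \<rho>" and kern: "neumann_heat_kernel P \<rho> W"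
    and g: "continuous_on (closure P) g" "\<And>y. y \<in> closure P \<Longrightarrow> g y \<le> G"
    and "x \<in> closure P" "s < t"
  shows "(LINT y:P|lborel. W x t y s * g y) \<le> G"
proof -
  have "neumann_heat_solution P \<rho> s g (\<lambda>x t. LINT y:P|lborel. W x t y s * g y)"
    using kern g unfolding neumann_heat_kernel_def by blast
  then show ?thesis
    using neumann_heat_solution_le[OF sd _ g] assms by blast
qed

lemma abs_le_mul_clamp:
  fixes w c :: real
  assumes "0 < c"
  shows "\<bar>w\<bar> - c \<le> w * max (-1) (min 1 (w / c))"
proof (cases "c \<le> \<bar>w\<bar>")
  case True
  then have "max (-1) (min 1 (w / c)) = sgn w"
    using assms by (auto simp: sgn_if field_simps)
  moreover have "w * sgn w = \<bar>w\<bar>"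
    by (simp add: sgn_if)
  ultimately show ?thesis
    using assms by simp
next
  case False
  then have clamp: "max (-1) (min 1 (w / c)) = w / c"
    using assms by (auto simp: field_simps)
  have "0 \<le> w * (w / c)"
    using assms by (simp add: zero_le_mult_iff zero_le_divide_iff)
  then show ?thesis
    unfolding clamp using False by linarith
qed

text \<open>Testing the kernel against the continuous clamps \<open>max (-1) (min 1 (W / c))\<close> and
  letting \<open>c \<rightarrow> 0\<close>.\<close>
lemma neumann_heat_kernel_abs_integral_le_1:
  assumes sd: "smooth_domain P \<rho>" and kern: "neumann_heat_kernel P \<rho> W"
    and x: "x \<in> closure P" and "s < t"
  shows "(LINT y:P|lborel. \<bar>W x t y s\<bar>) \<le> 1"
proof -
  have "bounded P"
    using sd unfolding smooth_domain_def by blast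
  then have "emeasure lborel P < \<infinity>"
    by (rule emeasure_bounded_finite)
  have "P \<in> sets lborel"
    using smooth_domain_open[OF sd] by simp
  then have int_const: "set_integrable lborel P (\<lambda>_. c)" for c :: real
    using \<open>emeasure lborel P < \<infinity>\<close>
    by (simp add: set_integrable_def integrable_indicator_iff)
  have "continuous_on {(x,t,y,s). x \<in> closure P \<and> y \<in> closure P \<and> s < t} (\<lambda>(x,t,y,s). W x t y s)"
    using kern unfolding neumann_heat_kernel_def by blast
  then have "continuous_on (closure P) (\<lambda>y. (\<lambda>(x,t,y,s). W x t y s) (x, t, y, s))"
    by (rule continuous_on_compose2) (use x \<open>s < t\<close> in \<open>auto intro!: continuous_intros\<close>)
  then have cW: "continuous_on (closure P) (\<lambda>y. W x t y s)"
    by simp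
  have "set_integrable lborel P (\<lambda>y. W x t y s)"
    using neumann_heat_kernel_set_integrable[OF kern continuous_on_const x \<open>s < t\<close>, of 1] by simp
  then have int_abs: "set_integrable lborel P (\<lambda>y. \<bar>W x t y s\<bar>)"
    by (rule set_integrable_abs)
  have bound: "(LINT y:P|lborel. \<bar>W x t y s\<bar>) \<le> 1 + c * measure lborel P" if "0 < c" for c
  proof -
    define g where "g y = max (-1) (min 1 (W x t y s / c))" for y
    have cg: "continuous_on (closure P) g"
      unfolding g_def by (intro continuous_intros cW) (use that in simp)
    have "(LINT y:P|lborel. \<bar>W x t y s\<bar> - c) \<le> (LINT y:P|lborel. W x t y s * g y)"
      using abs_le_mul_clamp[OF that]
      by (intro set_integral_mono set_integral_diff(1) int_abs int_const
          neumann_heat_kernel_set_integrable[OF kern cg x \<open>s < t\<close>]) (simp add: g_def)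
    also have "\<dots> \<le> 1"
      by (rule neumann_heat_kernel_integral_le[OF sd kern cg _ x \<open>s < t\<close>]) (simp add: g_def)
    finally show ?thesis
      using set_integral_diff(2)[OF int_abs int_const] \<open>emeasure lborel P < \<infinity>\<close>
      by (simp add: set_integral_const[OF \<open>P \<in> sets lborel\<close>] mult.commute)
  qed
  have "((\<lambda>c. 1 + c * measure lborel P) \<longlongrightarrow> 1) (at_right 0)"
    by (auto intro!: tendsto_eq_intros)
  moreover have "\<forall>\<^sub>F c in at_right 0. (LINT y:P|lborel. \<bar>W x t y s\<bar>) \<le> 1 + c * measure lborel P"
    using eventually_at_right_less by (rule eventually_mono) (rule bound)
  ultimately show ?thesis
    by (rule tendsto_lowerbound) simp
qed

lemma neumann_heat_kernel_integral_abs_le: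
  assumes sd: "smooth_domain P \<rho>" and kern: "neumann_heat_kernel P \<rho> W"
    and x: "x \<in> closure P" and "s < t" and f: "\<And>y. y \<in> P \<Longrightarrow> \<bar>f y\<bar> \<le> M"
  shows "\<bar>LINT y:P|lborel. W x t y s * f y\<bar> \<le> M"
proof -
  obtain y where "y \<in> P"
    using sd by (auto simp: smooth_domain_def)
  then have "0 \<le> M"
    using f by force
  show ?thesis
  proof (cases "set_integrable lborel P (\<lambda>y. W x t y s * f y)")
    case True
    have int_W: "set_integrable lborel P (\<lambda>y. W x t y s)"
      using neumann_heat_kernel_set_integrable[OF kern continuous_on_const x \<open>s < t\<close>, of 1] by simp
    have "\<bar>LINT y:P|lborel. W x t y s * f y\<bar> \<le> (LINT y:P|lborel. \<bar>W x t y s * f y\<bar>)"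
      using set_integral_norm_bound[OF True] by simp
    also have "\<dots> \<le> (LINT y:P|lborel. M * \<bar>W x t y s\<bar>)"
    proof (rule set_integral_mono)
      show "set_integrable lborel P (\<lambda>y. \<bar>W x t y s * f y\<bar>)"
        using set_integrable_abs[OF True] by simp
      show "set_integrable lborel P (\<lambda>y. M * \<bar>W x t y s\<bar>)"
        using set_integrable_abs[OF int_W] by (rule set_integrable_mult_right)
      show "\<bar>W x t y s * f y\<bar> \<le> M * \<bar>W x t y s\<bar>" if "y \<in> P" for y
        using mult_left_mono[OF f[OF that], of "\<bar>W x t y s\<bar>"] by (simp add: abs_mult mult.commute)
    qed
    also have "\<dots> = M * (LINT y:P|lborel. \<bar>W x t y s\<bar>)"
      by simp
    also have "\<dots> \<le> M"
      using neumann_heat_kernel_abs_integral_le_1[OF sd kern x \<open>s < t\<close>] \<open>0 \<le> M\<close>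
      by (rule mult_left_le)
    finally show ?thesis .
  next
    case False
    then show ?thesis
      using \<open>0 \<le> M\<close>
      by (simp add: set_lebesgue_integral_def set_integrable_def not_integrable_integral_eq)
  qed
qed

text \<open>For \<open>s < t\<close> the slice \<open>s \<mapsto> \<integral>\<^sub>P W(x,t,y,s) F(y,s) dy\<close> coincides with the
  \<open>y\<close>-integral of a jointly Borel measurable function, which makes it measurable in \<open>s\<close>;
  at \<open>s = t\<close> the kernel carries no information.\<close>
lemma neumann_heat_kernel_time_slice:
  fixes F :: "real^2 \<Rightarrow> real \<Rightarrow> real"
  assumes sd: "smooth_domain P \<rho>" and kern: "neumann_heat_kernel P \<rho> W" and x: "x \<in> closure P"
    and meas: "set_borel_measurable borel (P \<times> {0..}) (\<lambda>p. F (fst p) (snd p))"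
    and bnd: "\<And>y s. y \<in> P \<Longrightarrow> 0 \<le> s \<Longrightarrow> s \<le> t \<Longrightarrow> \<bar>F y s\<bar> \<le> M" and "0 \<le> M"
  obtains J where "J \<in> borel_measurable lborel" and "\<And>s. \<bar>J s\<bar> \<le> M"
    and "\<And>s. 0 \<le> s \<Longrightarrow> s < t \<Longrightarrow> J s = (LINT y:P|lborel. W x t y s * F y s)"
proof -
  define J where "J s = (\<integral>y. (indicator ({..<t} \<times> P) (s, y) * W x t y s)
      * (indicator (P \<times> {0..}) (y, s) * F y s) \<partial>lborel)" for s
  have "continuous_on {(x,t,y,s). x \<in> closure P \<and> y \<in> closure P \<and> s < t} (\<lambda>(x,t,y,s). W x t y s)"
    using kern unfolding neumann_heat_kernel_def by blast
  then have "continuous_on ({..<t} \<times> P) (\<lambda>q. (\<lambda>(x,t,y,s). W x t y s) (x, t, snd q, fst q))"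
    by (rule continuous_on_compose2) (use x closure_subset[of P] in \<open>auto intro!: continuous_intros\<close>)
  then have "continuous_on ({..<t} \<times> P) (\<lambda>q. W x t (snd q) (fst q))"
    by simp
  then have "(\<lambda>q::real \<times> (real^2). indicator ({..<t} \<times> P) q *\<^sub>R W x t (snd q) (fst q))
      \<in> borel_measurable borel"
    by (intro borel_measurable_continuous_on_indicator borel_open open_Times open_lessThan
        smooth_domain_open[OF sd])
  moreover have "(\<lambda>q::real \<times> (real^2). indicator (P \<times> {0..}) (snd q, fst q) *\<^sub>R F (snd q) (fst q))
      \<in> borel_measurable borel"
    using measurable_compose[OF _ meas[unfolded set_borel_measurable_def], of "\<lambda>q. (snd q, fst q)"]
    by (simp add: borel_measurable_continuous_onI continuous_intros)
  ultimately have "(\<lambda>(s, y). (indicator ({..<t} \<times> P) (s, y) * W x t y s)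
      * (indicator (P \<times> {0..}) (y, s) * F y s)) \<in> borel_measurable (lborel \<Otimes>\<^sub>M lborel)"
    unfolding lborel_prod measurable_lborel2 case_prod_beta' by (simp add: borel_measurable_times)
  then have "J \<in> borel_measurable lborel"
    unfolding J_def by (rule lborel.borel_measurable_lebesgue_integral)
  moreover have J_eq: "J s = (LINT y:P|lborel. W x t y s * F y s)" if "0 \<le> s" "s < t" for s
    unfolding J_def set_lebesgue_integral_def
    by (rule Bochner_Integration.integral_cong) (use that in \<open>auto simp: indicator_def\<close>)
  moreover have "\<bar>J s\<bar> \<le> M" for s
  proof (cases "0 \<le> s \<and> s < t")
    case True
    then show ?thesis
      using J_eq neumann_heat_kernel_integral_abs_le[OF sd kern x, of s t "\<lambda>y. F y s" M] bnd
      by simp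
  next
    case False
    then have "J s = 0"
      unfolding J_def by (intro integral_eq_zero_AE AE_I2) (auto simp: indicator_def)
    then show ?thesis
      using \<open>0 \<le> M\<close> by simp
  qed
  ultimately show ?thesis
    using that by blast
qed

section \<open>Time integrals\<close>

lemma set_integral_Icc_cong_Ico:
  fixes f g :: "real \<Rightarrow> real"
  assumes "\<And>s. a \<le> s \<Longrightarrow> s < b \<Longrightarrow> f s = g s"
  shows "(LINT s:{a..b}|lborel. f s) = (LINT s:{a..b}|lborel. g s)"
  unfolding set_lebesgue_integral_def
  by (rule integral_discrete_difference[where X="{b}"]) (use assms in \<open>auto simp: indicator_def\<close>)

lemma set_integrable_Icc_bounded:
  fixes f :: "real \<Rightarrow> real"
  assumes "f \<in> borel_measurable lborel" and "\<And>s. s \<in> {a..b} \<Longrightarrow> \<bar>f s\<bar> \<le> K"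
  shows "set_integrable lborel {a..b} f"
proof (rule set_integrable_bound[where f="\<lambda>_. K"])
  show "set_integrable lborel {a..b} (\<lambda>_. K)"
    by (cases "a \<le> b") (simp_all add: set_integrable_def integrable_indicator_iff)
  show "set_borel_measurable lborel {a..b} f"
    using assms(1) unfolding set_borel_measurable_def by measurable
  show "AE s in lborel. s \<in> {a..b} \<longrightarrow> norm (f s) \<le> norm K"
    using assms(2) by (intro AE_I2) force
qed

lemma exp_decay_set_integral:
  fixes c t :: real
  assumes "0 \<le> t"
  shows "set_integrable lborel {0..t} (\<lambda>s. c * exp (- c * (t - s)))"
    and "(LINT s:{0..t}|lborel. c * exp (- c * (t - s))) = 1 - exp (- c * t)"
proof -
  have "integrable lborel (\<lambda>s. c * exp (- c * (t - s)) * indicator {0..t} s)"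
    by (rule borel_integrable_atLeastAtMost) (auto intro!: continuous_intros)
  then show "set_integrable lborel {0..t} (\<lambda>s. c * exp (- c * (t - s)))"
    unfolding set_integrable_def by (simp add: mult.commute)
  have "((\<lambda>s. exp (- c * (t - s))) has_real_derivative c * exp (- c * (t - s))) (at s within {0..t})"
    for s
    by (auto intro!: derivative_eq_intros)
  then have "(LINT s:{0..t}|lborel. c * exp (- c * (t - s))) = exp (- c * (t - t)) - exp (- c * (t - 0))"
    unfolding set_lebesgue_integral_def using assms
    by (intro integral_FTC_atLeastAtMost)
      (auto simp: has_real_derivative_iff_has_vector_derivative intro!: continuous_intros)
  then show "(LINT s:{0..t}|lborel. c * exp (- c * (t - s))) = 1 - exp (- c * t)"
    by simp
qed

lemma abs_mult_add_mult_le: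
  fixes a b x y K M :: real
  assumes "\<bar>a\<bar> \<le> K" "\<bar>b\<bar> \<le> K" "\<bar>x\<bar> \<le> M" "\<bar>y\<bar> \<le> M"
  shows "\<bar>a * x + b * y\<bar> \<le> 2 * K * M"
proof -
  have "\<bar>a * x + b * y\<bar> \<le> \<bar>a\<bar> * \<bar>x\<bar> + \<bar>b\<bar> * \<bar>y\<bar>"
    by (metis abs_mult abs_triangle_ineq)
  also have "\<dots> \<le> K * M + K * M"
    using assms by (intro add_mono mult_mono) auto
  finally show ?thesis
    by simp
qed

lemma set_integrable_Icc_mult_add_mult:
  fixes p q f g :: "real \<Rightarrow> real"
  assumes "p \<in> borel_measurable lborel" "q \<in> borel_measurable lborel"
    and "f \<in> borel_measurable lborel" "g \<in> borel_measurable lborel"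
    and "\<And>s. s \<in> {a..b} \<Longrightarrow> \<bar>p s\<bar> \<le> K" "\<And>s. s \<in> {a..b} \<Longrightarrow> \<bar>q s\<bar> \<le> K"
    and "\<And>s. \<bar>f s\<bar> \<le> M" "\<And>s. \<bar>g s\<bar> \<le> M"
  shows "set_integrable lborel {a..b} (\<lambda>s. p s * f s + q s * g s)"
  using assms by (intro set_integrable_Icc_bounded[where K="2 * K * M"] abs_mult_add_mult_le) auto

lemma weighted_time_integral_diff_le:
  fixes p0 p1 k I0 I1 J0 J1 :: "real \<Rightarrow> real"
  assumes "0 \<le> c" "0 \<le> t" "0 \<le> E"
    and meas: "p0 \<in> borel_measurable lborel" "p1 \<in> borel_measurable lborel"
      "k \<in> borel_measurable lborel" "J0 \<in> borel_measurable lborel" "J1 \<in> borel_measurable lborel"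
    and k: "continuous_on {0..t} k"
    and J: "\<And>s. \<bar>J0 s\<bar> \<le> M" "\<And>s. \<bar>J1 s\<bar> \<le> M"
    and IJ: "\<And>s. 0 \<le> s \<Longrightarrow> s < t \<Longrightarrow> I0 s = J0 s" "\<And>s. 0 \<le> s \<Longrightarrow> s < t \<Longrightarrow> I1 s = J1 s"
    and p: "\<And>s. s \<in> {0..t} \<Longrightarrow> \<bar>p0 s - k s\<bar> \<le> E * (c * exp (- c * (t - s)))"
      "\<And>s. s \<in> {0..t} \<Longrightarrow> \<bar>p1 s - k s\<bar> \<le> E * (c * exp (- c * (t - s)))"
  shows "\<bar>(LINT s:{0..t}|lborel. p0 s * I0 s + p1 s * I1 s)
      - (LINT s:{0..t}|lborel. k s * I0 s + k s * I1 s)\<bar> \<le> 2 * E * M"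
proof -
  define A where "A s = p0 s * J0 s + p1 s * J1 s" for s
  define B where "B s = k s * J0 s + k s * J1 s" for s
  obtain K where K: "\<And>s. s \<in> {0..t} \<Longrightarrow> \<bar>k s\<bar> \<le> K"
    using continuous_on_compact_bound[OF compact_Icc k] by auto
  have "\<bar>p0 s\<bar> \<le> K + E * c" "\<bar>p1 s\<bar> \<le> K + E * c" if "s \<in> {0..t}" for s
  proof -
    have "c * exp (- c * (t - s)) \<le> c"
      using that \<open>0 \<le> c\<close> by (simp add: mult_left_le)
    then show "\<bar>p0 s\<bar> \<le> K + E * c" "\<bar>p1 s\<bar> \<le> K + E * c"
      using p[OF that] K[OF that] mult_left_mono[of _ c E] \<open>0 \<le> E\<close> by fastforce+
  qed
  then have int_A: "set_integrable lborel {0..t} A"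
    unfolding A_def by (rule set_integrable_Icc_mult_add_mult[OF meas(1,2,4,5) _ _ J])
  have int_B: "set_integrable lborel {0..t} B"
    unfolding B_def by (rule set_integrable_Icc_mult_add_mult[OF meas(3,3,4,5) K K J])
  have int_decay: "set_integrable lborel {0..t} (\<lambda>s. 2 * E * M * (c * exp (- c * (t - s))))"
    using exp_decay_set_integral(1)[OF \<open>0 \<le> t\<close>] by (rule set_integrable_mult_right)
  have "(LINT s:{0..t}|lborel. p0 s * I0 s + p1 s * I1 s) = (LINT s:{0..t}|lborel. A s)"
    by (rule set_integral_Icc_cong_Ico) (simp add: A_def IJ)
  moreover have "(LINT s:{0..t}|lborel. k s * I0 s + k s * I1 s) = (LINT s:{0..t}|lborel. B s)"
    by (rule set_integral_Icc_cong_Ico) (simp add: B_def IJ)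
  ultimately have "(LINT s:{0..t}|lborel. p0 s * I0 s + p1 s * I1 s)
      - (LINT s:{0..t}|lborel. k s * I0 s + k s * I1 s) = (LINT s:{0..t}|lborel. A s - B s)"
    using set_integral_diff(2)[OF int_A int_B] by simp
  also have "\<bar>\<dots>\<bar> \<le> (LINT s:{0..t}|lborel. \<bar>A s - B s\<bar>)"
    using set_integral_norm_bound[OF set_integral_diff(1)[OF int_A int_B]] by simp
  also have "\<dots> \<le> (LINT s:{0..t}|lborel. 2 * E * M * (c * exp (- c * (t - s))))"
  proof (rule set_integral_mono)
    show "set_integrable lborel {0..t} (\<lambda>s. \<bar>A s - B s\<bar>)"
      by (rule set_integrable_abs[OF set_integral_diff(1)[OF int_A int_B]])
    fix s assume "s \<in> {0..t}"
    have "A s - B s = (p0 s - k s) * J0 s + (p1 s - k s) * J1 s"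
      by (simp add: A_def B_def algebra_simps)
    then show "\<bar>A s - B s\<bar> \<le> 2 * E * M * (c * exp (- c * (t - s)))"
      using abs_mult_add_mult_le[OF p[OF \<open>s \<in> {0..t}\<close>] J] by (simp add: ac_simps)
  qed (rule int_decay)
  also have "\<dots> = 2 * E * M * (1 - exp (- c * t))"
    using exp_decay_set_integral(2)[OF \<open>0 \<le> t\<close>] by simp
  also have "\<dots> \<le> 2 * E * M"
    using \<open>0 \<le> E\<close> J(1)[of 0] by (intro mult_left_le) auto
  finally show ?thesis .
qed

lemma neumann_heat_kernel_weighted_integral_diff_le:
  fixes F :: "real^2 \<Rightarrow> real \<Rightarrow> real \<Rightarrow> real" and p :: "real \<Rightarrow> real \<Rightarrow> real" and k :: "real \<Rightarrow> real"
  assumes sd: "smooth_domain P \<rho>" and kern: "neumann_heat_kernel P \<rho> W" and x: "x \<in> closure P"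
    and "0 \<le> c" "0 \<le> t" "0 \<le> E" "0 \<le> M"
    and F_meas: "\<And>w. w \<in> {z, z'} \<Longrightarrow> set_borel_measurable borel (P \<times> {0..}) (\<lambda>q. F (fst q) w (snd q))"
    and F_le: "\<And>w y s. w \<in> {z, z'} \<Longrightarrow> y \<in> P \<Longrightarrow> 0 \<le> s \<Longrightarrow> s \<le> t \<Longrightarrow> \<bar>F y w s\<bar> \<le> M"
    and meas: "\<And>w. p w \<in> borel_measurable lborel" "k \<in> borel_measurable lborel"
    and k: "continuous_on {0..t} k"
    and p: "\<And>w s. w \<in> {z, z'} \<Longrightarrow> \<bar>p w s - k s\<bar> \<le> E * (c * exp (- c * (t - s)))"
  shows "\<bar>(LINT s:{0..t}|lborel. (LINT y:P|lborel. W x t y s * p z s * F y z s)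
              + (LINT y:P|lborel. W x t y s * p z' s * F y z' s))
          - (LINT s:{0..t}|lborel. (LINT y:P|lborel. k s * W x t y s * F y z s)
              + (LINT y:P|lborel. k s * W x t y s * F y z' s))\<bar> \<le> 2 * E * M"
proof -
  have pull: "(LINT y:P|lborel. W x t y s * r * F y w s) = r * (LINT y:P|lborel. W x t y s * F y w s)"
    "(LINT y:P|lborel. r * W x t y s * F y w s) = r * (LINT y:P|lborel. W x t y s * F y w s)"
    for r w s
    by (simp_all add: mult.assoc mult.left_commute[of _ r])
  have z: "z \<in> {z, z'}" "z' \<in> {z, z'}"
    by simp_all
  obtain J0 where J0: "J0 \<in> borel_measurable lborel" "\<And>s. \<bar>J0 s\<bar> \<le> M"
      "\<And>s. 0 \<le> s \<Longrightarrow> s < t \<Longrightarrow> J0 s = (LINT y:P|lborel. W x t y s * F y z s)"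
    using neumann_heat_kernel_time_slice[OF sd kern x F_meas[OF z(1)] F_le[OF z(1)] \<open>0 \<le> M\<close>]
    by blast
  obtain J1 where J1: "J1 \<in> borel_measurable lborel" "\<And>s. \<bar>J1 s\<bar> \<le> M"
      "\<And>s. 0 \<le> s \<Longrightarrow> s < t \<Longrightarrow> J1 s = (LINT y:P|lborel. W x t y s * F y z' s)"
    using neumann_heat_kernel_time_slice[OF sd kern x F_meas[OF z(2)] F_le[OF z(2)] \<open>0 \<le> M\<close>]
    by blast
  show ?thesis
    unfolding pull using J0(3) J1(3)
    by (intro weighted_time_integral_diff_le[OF assms(4-6) meas(1,1,2) J0(1) J1(1) k J0(2) J1(2)]
        p[OF z(1)] p[OF z(2)]) simp_all
qed

theorem lemma3p5:
  fixes P :: "(real^2) set" and \<rho> :: "real^2 \<Rightarrow> real"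
    and W :: "real^2 \<Rightarrow> real \<Rightarrow> real^2 \<Rightarrow> real \<Rightarrow> real"
    and F :: "real^2 \<Rightarrow> real \<Rightarrow> real \<Rightarrow> real"
    and a h t x3 :: real and x :: "real^2"
  assumes "smooth_domain P \<rho>"
    and "neumann_heat_kernel P \<rho> W"
    and "a > 0" and "h > 0" and "a * h \<le> 1/3"
    and "\<exists>B. \<forall>y\<in>P. \<forall>y3\<in>{0,h}. \<forall>s\<ge>0. \<bar>F y y3 s\<bar> \<le> B"
    and "\<forall>y3\<in>{0,h}. set_borel_measurable borel (P \<times> {0..}) (\<lambda>p. F (fst p) y3 (snd p))"
    and "x \<in> P" and "x3 \<in> {0..h}" and "t > 0"
  shows "\<bar>(LINT s:{0..t}|lborel.
              (LINT y:P|lborel. W x t y s * P1 a h x3 t 0 s * F y 0 s)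
            + (LINT y:P|lborel. W x t y s * P1 a h x3 t h s * F y h s))
          - (LINT s:{0..t}|lborel.
              (LINT y:P|lborel. 2 * exp (- (alpha1 a h)\<^sup>2 * (t - s)) * ((alpha1 a h)\<^sup>2 / (4 * a))
                                  * W x t y s * F y 0 s)
            + (LINT y:P|lborel. 2 * exp (- (alpha1 a h)\<^sup>2 * (t - s)) * ((alpha1 a h)\<^sup>2 / (4 * a))
                                  * W x t y s * F y h s))\<bar>
         \<le> 5 * h * (SUP p\<in>P \<times> {0,h} \<times> {0..t}. \<bar>F (fst p) (fst (snd p)) (snd (snd p))\<bar>)"
proof -
  define M where "M = (SUP p\<in>P \<times> {0,h} \<times> {0..t}. \<bar>F (fst p) (fst (snd p)) (snd (snd p))\<bar>)"
  obtain B where "\<forall>y\<in>P. \<forall>y3\<in>{0,h}. \<forall>s\<ge>0. \<bar>F y y3 s\<bar> \<le> B"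
    using assms(6) by blast
  then have bdd: "bdd_above ((\<lambda>p. \<bar>F (fst p) (fst (snd p)) (snd (snd p))\<bar>) ` (P \<times> {0,h} \<times> {0..t}))"
    by (intro bdd_aboveI2[where M=B]) auto
  have F_le: "\<bar>F y z s\<bar> \<le> M" if "z \<in> {0, h}" "y \<in> P" "0 \<le> s" "s \<le> t" for z y s
    using cSUP_upper[OF _ bdd, of "(y, z, s)"] that by (simp add: M_def)
  have F_meas: "set_borel_measurable borel (P \<times> {0..}) (\<lambda>q. F (fst q) z (snd q))" if "z \<in> {0, h}" for z
    using assms(7) that by blast
  have "0 \<le> M"
    using F_le[of 0 x 0] \<open>x \<in> P\<close> \<open>t > 0\<close> by simp
  have "x \<in> closure P"
    using \<open>x \<in> P\<close> closure_subset by blast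
  have "0 \<le> x3" "x3 \<le> h" "0 \<le> t" "0 \<le> h / 2" "0 \<le> (alpha1 a h)\<^sup>2"
    using assms(4,9,10) by simp_all
  have "(\<lambda>s. P1 a h x3 t z s) \<in> borel_measurable lborel"
    "(\<lambda>s. 2 * exp (- (alpha1 a h)\<^sup>2 * (t - s)) * ((alpha1 a h)\<^sup>2 / (4 * a))) \<in> borel_measurable lborel"
    "continuous_on {0..t} (\<lambda>s. 2 * exp (- (alpha1 a h)\<^sup>2 * (t - s)) * ((alpha1 a h)\<^sup>2 / (4 * a)))"
    for z
    unfolding P1_def by (measurable, measurable, intro continuous_intros)
  from neumann_heat_kernel_weighted_integral_diff_le[where z=0 and z'=h and p="P1 a h x3 t"
      and k="\<lambda>s. 2 * exp (- (alpha1 a h)\<^sup>2 * (t - s)) * ((alpha1 a h)\<^sup>2 / (4 * a))",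
      OF assms(1,2) \<open>x \<in> closure P\<close> \<open>0 \<le> (alpha1 a h)\<^sup>2\<close> \<open>0 \<le> t\<close> \<open>0 \<le> h / 2\<close> \<open>0 \<le> M\<close>
      F_meas F_le this P1_approx[OF assms(3-5) \<open>0 \<le> x3\<close> \<open>x3 \<le> h\<close>]]
  moreover have "2 * (h / 2) * M \<le> 5 * h * M"
    using \<open>h > 0\<close> \<open>0 \<le> M\<close> by simp
  ultimately show ?thesis
    unfolding M_def by (rule order.trans)
qed

end
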